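(* Let $n\ge 3$ be an integer and let $\{D_I\}_{I\in\binom{[n]}{n-1}}$ be a family of positive real numbers, where $[n]=\{1,\dots,n\}$; write $D_{\hat i}=D_{[n]\setminus\{i\}}$ for $i\in[n]$. (a) There exists a positive-weighted tree $\mathcal T=(T,w)$ with $[n]\subseteq V(T)$ such that $D_{\hat i}(\mathcal T)=D_{\hat i}$ for all $i\in[n]$ if and only if $$(n-2)D_{\hat i}\le \sum_{j\in[n]\setminus\{i\}} D_{\hat j}\quad\text{for every } i\in[n],$$ and at most one of these $n$ inequalities is an equality. (b) There exists a positive-weighted tree $\mathcal T=(T,w)$ such that $[n]$ is contained in the set of leaves of $T$ and $D_{\hat i}(\mathcal T)=D_{\hat i}$ for all $i\in[n]$ if and only if $$(n-2)D_{\hat i}< \sum_{j\in[n]\setminus\{i\}} D_{\hat j}\quad\text{for every } i\in[n].$$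
   Context: All graphs are simple and finite. A positive-weighted graph $\mathcal G=(G,w)$ is a graph $G$ with a function $w:E(G)\to\mathbb R_{>0}$; for a subgraph $G'$, $w(G')$ is the sum of the weights of the edges of $G'$. For distinct vertices $i_1,\dots,i_k$ of $G$, $D_{\{i_1,\dots,i_k\}}(\mathcal G)$ is the minimum of $w(R)$ over all connected subgraphs $R$ of $G$ whose vertex set contains $i_1,\dots,i_k$. For a set $I\subseteq V(G)$ we write $D_I(\mathcal G)$ accordingly, and $D_{\hat i}(\mathcal G)=D_{[n]\setminus\{i\}}(\mathcal G)$. *)

theory Defs
  imports Complex_Main
begin

definition simple_graph :: "'v set \<Rightarrow> 'v set set \<Rightarrow> bool" where
  "simple_graph V E \<longleftrightarrow> finite V \<and>
     (\<forall>e\<in>E. \<exists>u v. u \<noteq> v \<and> u \<in> V \<and> v \<in> V \<and> e = {u, v})"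

definition adj :: "'v set set \<Rightarrow> 'v \<Rightarrow> 'v \<Rightarrow> bool" where
  "adj E u v \<longleftrightarrow> {u, v} \<in> E"

definition connected_graph :: "'v set \<Rightarrow> 'v set set \<Rightarrow> bool" where
  "connected_graph V E \<longleftrightarrow> simple_graph V E \<and> V \<noteq> {} \<and>
     (\<forall>u\<in>V. \<forall>v\<in>V. (adj E)\<^sup>*\<^sup>* u v)"

definition is_cycle :: "'v set set \<Rightarrow> 'v list \<Rightarrow> bool" where
  "is_cycle E vs \<longleftrightarrow> length vs \<ge> 3 \<and> distinct vs \<and>
     (\<forall>i < length vs. {vs ! i, vs ! ((i + 1) mod length vs)} \<in> E)"

definition is_tree :: "'v set \<Rightarrow> 'v set set \<Rightarrow> bool" where
  "is_tree V E \<longleftrightarrow> connected_graph V E \<and> \<not> (\<exists>vs. is_cycle E vs)"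

definition subgraph :: "'v set \<Rightarrow> 'v set set \<Rightarrow> 'v set \<Rightarrow> 'v set set \<Rightarrow> bool" where
  "subgraph V' E' V E \<longleftrightarrow> V' \<subseteq> V \<and> E' \<subseteq> E \<and> (\<forall>e\<in>E'. e \<subseteq> V')"

definition Dsub :: "'v set \<Rightarrow> 'v set set \<Rightarrow> ('v set \<Rightarrow> real) \<Rightarrow> 'v set \<Rightarrow> real" where
  "Dsub V E w I = Inf {sum w E' | V' E'. subgraph V' E' V E \<and> connected_graph V' E' \<and> I \<subseteq> V'}"

definition is_leaf :: "'v set set \<Rightarrow> 'v \<Rightarrow> bool" where
  "is_leaf E v \<longleftrightarrow> card {e \<in> E. v \<in> e} = 1"

end

theory Submission
  imports Defs
begin

(*
  Write D_k for the weight of a lightest connected subgraph R_k of the tree containing all terminals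
  except k. For a terminal i, the paths from i to the other terminals form a connected subgraph F
  containing them, so D_i <= w(F). Every edge of the path from i to j is a bridge separating i
  from j, hence lies in every R_k with k different from i and j. So each edge of F is counted at
  least n - 2 times in the sum of the w(R_k) over k <> i, which gives (n - 2) D_i <= sum_{k<>i} D_k,
  strictly if some edge of the path from i to j also lies in R_j. That happens when i is a leaf,
  and for one of any two terminals i, i': otherwise the first edge of the path from i to i' avoids
  R_i and R_i', and a third terminal connects i to i' around it.

  Conversely, a star with legs of length x_i to the terminals has D_i = sum_{j<>i} x_j. This is
  solved by x_i = (sum_j D_j) / (n - 1) - D_i, the inequalities say exactly that x_i >= 0
  (resp. x_i > 0), and a single terminal with x_i = 0 serves as the centre of the star.
*)

section \<open>Walks and paths\<close>

definition is_walk :: "'v set set \<Rightarrow> 'v list \<Rightarrow> bool" where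
  "is_walk E xs \<longleftrightarrow> (\<forall>p. Suc p < length xs \<longrightarrow> {xs!p, xs!Suc p} \<in> E)"

definition is_path :: "'v set set \<Rightarrow> 'v list \<Rightarrow> 'v \<Rightarrow> 'v \<Rightarrow> bool" where
  "is_path E xs a b \<longleftrightarrow> xs \<noteq> [] \<and> hd xs = a \<and> last xs = b \<and> distinct xs \<and> is_walk E xs"

definition walk_edges :: "'v list \<Rightarrow> 'v set set" where
  "walk_edges xs = {{xs!p, xs!Suc p} | p. Suc p < length xs}"

lemma is_walk_iff_walk_edges: "is_walk E xs \<longleftrightarrow> walk_edges xs \<subseteq> E"
  by (auto simp: is_walk_def walk_edges_def)

lemma walk_edge_subset_vertices: "e \<in> walk_edges xs \<Longrightarrow> e \<subseteq> set xs"
  by (auto simp: walk_edges_def)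

lemma walk_edges_rev_subset: "walk_edges (rev xs) \<subseteq> walk_edges xs"
proof
  fix e assume "e \<in> walk_edges (rev xs)"
  then obtain p where p: "Suc p < length xs" "e = {rev xs ! p, rev xs ! Suc p}"
    by (auto simp: walk_edges_def)
  define q where "q = length xs - Suc (Suc p)"
  have "Suc q < length xs" "e = {xs ! q, xs ! Suc q}"
    using p by (auto simp: q_def rev_nth Suc_diff_Suc insert_commute)
  then show "e \<in> walk_edges xs" by (auto simp: walk_edges_def)
qed

lemma walk_edges_rev: "walk_edges (rev xs) = walk_edges xs"
  using walk_edges_rev_subset[of xs] walk_edges_rev_subset[of "rev xs"] by simp

lemma path_rev: "is_path E xs a b \<Longrightarrow> is_path E (rev xs) b a"
  by (auto simp: is_path_def is_walk_iff_walk_edges walk_edges_rev hd_rev last_rev)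

lemma symp_adj: "symp (adj E)"
  by (auto intro: sympI simp: adj_def insert_commute)

lemma rtranclp_adj_sym: "(adj E)\<^sup>*\<^sup>* a b \<Longrightarrow> (adj E)\<^sup>*\<^sup>* b a"
  by (rule sympD[OF symp_rtranclp[OF symp_adj]])

lemma rtranclp_adj_mono: "E \<subseteq> E' \<Longrightarrow> (adj E)\<^sup>*\<^sup>* a b \<Longrightarrow> (adj E')\<^sup>*\<^sup>* a b"
  by (metis adj_def predicate2D predicate2I rtranclp_mono subsetD)

lemma rtranclp_adj_in_vertices:
  assumes "(adj E)\<^sup>*\<^sup>* a b" "a \<in> V" "simple_graph V E"
  shows "b \<in> V"
  using assms
proof (induction rule: rtranclp_induct)
  case (step y z)
  then have "{y, z} \<in> E" by (simp add: adj_def)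
  then show ?case using step by (metis doubleton_eq_iff simple_graph_def)
qed simp

lemma rtranclp_adj_walk_segment:
  assumes "\<And>p. k \<le> p \<Longrightarrow> p < l \<Longrightarrow> {xs!p, xs!Suc p} \<in> E" "k \<le> l"
  shows "(adj E)\<^sup>*\<^sup>* (xs!k) (xs!l)"
  using assms
proof (induction l)
  case (Suc l)
  show ?case
  proof (cases "k = Suc l")
    case False
    then have "(adj E)\<^sup>*\<^sup>* (xs!k) (xs!l)" using Suc by simp
    moreover have "adj E (xs!l) (xs!Suc l)" using Suc False by (simp add: adj_def)
    ultimately show ?thesis by (rule rtranclp.rtrancl_into_rtrancl)
  qed simp
qed simp

lemma rtranclp_adj_along_path:
  assumes "is_path E xs a b" "x \<in> set xs"
  shows "(adj (walk_edges xs))\<^sup>*\<^sup>* a x"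
proof -
  obtain q where q: "q < length xs" "xs!q = x" using assms(2) by (metis in_set_conv_nth)
  have "(adj (walk_edges xs))\<^sup>*\<^sup>* (xs!0) (xs!q)"
    by (rule rtranclp_adj_walk_segment) (use q in \<open>auto simp: walk_edges_def\<close>)
  then show ?thesis using assms(1) q by (auto simp: is_path_def hd_conv_nth)
qed

lemma rtranclp_adj_imp_path: "(adj E)\<^sup>*\<^sup>* a b \<Longrightarrow> \<exists>xs. is_path E xs a b"
proof (induction rule: converse_rtranclp_induct)
  case base
  show ?case by (rule exI[of _ "[b]"]) (simp add: is_path_def is_walk_def)
next
  case (step a y)
  then obtain ys where ys: "is_path E ys y b" by blast
  show ?case
  proof (cases "a \<in> set ys")
    case True
    then obtain k where k: "k < length ys" "ys!k = a" by (metis in_set_conv_nth)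
    have "is_path E (drop k ys) a b"
      using ys k by (auto simp: is_path_def is_walk_def hd_drop_conv_nth)
    then show ?thesis by blast
  next
    case False
    have "is_path E (a # ys) a b"
      using ys False step(1) unfolding is_path_def is_walk_def adj_def
      by (auto simp: nth_Cons hd_conv_nth split: nat.splits)
    then show ?thesis by blast
  qed
qed

lemma path_vertices_subset:
  assumes "simple_graph V E" "is_path E xs a b" "a \<in> V"
  shows "set xs \<subseteq> V"
proof
  fix x assume "x \<in> set xs"
  then have "(adj (walk_edges xs))\<^sup>*\<^sup>* a x" by (rule rtranclp_adj_along_path[OF assms(2)])
  then have "(adj E)\<^sup>*\<^sup>* a x"
    using assms(2) by (auto intro: rtranclp_adj_mono simp: is_path_def is_walk_iff_walk_edges)
  then show "x \<in> V" using assms(1,3) rtranclp_adj_in_vertices by metis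
qed

lemma path_length_ge_2:
  assumes "is_path E xs a b" "a \<noteq> b"
  shows "2 \<le> length xs"
proof (rule ccontr)
  assume "\<not> 2 \<le> length xs"
  moreover have "0 < length xs" using assms by (simp add: is_path_def)
  ultimately have "length xs = 1" by linarith
  then have "hd xs = last xs" by (cases xs) auto
  then show False using assms by (auto simp: is_path_def)
qed

lemma path_first_edge:
  assumes "is_path E xs a b" "a \<noteq> b"
  obtains y where "{a, y} \<in> walk_edges xs"
proof -
  have "Suc 0 < length xs" using path_length_ge_2[OF assms] by simp
  then have "{xs!0, xs!Suc 0} \<in> walk_edges xs" by (auto simp: walk_edges_def)
  moreover have "xs!0 = a" using assms(1) by (auto simp: is_path_def hd_conv_nth)
  ultimately show ?thesis using that by blast
qed

section \<open>Trees\<close>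

lemma tree_finite_edges: "is_tree V E \<Longrightarrow> finite E"
  by (rule finite_subset[of _ "Pow V"])
    (auto simp: is_tree_def connected_graph_def simple_graph_def)

lemma tree_path_exists: "is_tree V E \<Longrightarrow> a \<in> V \<Longrightarrow> b \<in> V \<Longrightarrow> \<exists>xs. is_path E xs a b"
  by (intro rtranclp_adj_imp_path) (simp add: is_tree_def connected_graph_def)

lemma tree_edge_is_bridge:
  assumes tree: "is_tree V E" and e: "{a, b} \<in> E" and ab: "a \<noteq> b"
  shows "\<not> (adj (E - {{a, b}}))\<^sup>*\<^sup>* a b"
proof
  assume "(adj (E - {{a, b}}))\<^sup>*\<^sup>* a b"
  then obtain xs where xs: "is_path (E - {{a, b}}) xs a b" by (auto dest: rtranclp_adj_imp_path)
  then have ends: "xs!0 = a" "xs!(length xs - 1) = b"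
    by (auto simp: is_path_def hd_conv_nth last_conv_nth)
  have "length xs \<ge> 3"
  proof (rule ccontr)
    assume "\<not> length xs \<ge> 3"
    moreover have "length xs \<ge> 2" using path_length_ge_2[OF xs ab] .
    ultimately have "length xs = 2" by simp
    moreover from this have "{xs!0, xs!Suc 0} \<in> E - {{a, b}}"
      using xs by (simp add: is_path_def is_walk_def)
    ultimately show False using ends by simp
  qed
  \<comment> \<open>the path closes up with the removed edge to a cycle\<close>
  moreover have "{xs ! i, xs ! ((i + 1) mod length xs)} \<in> E" if "i < length xs" for i
  proof (cases "Suc i < length xs")
    case True
    then show ?thesis using xs by (auto simp: is_path_def is_walk_def)
  next
    case False
    then have "Suc i = length xs" using that by simp
    then have "xs ! i = b" "(i + 1) mod length xs = 0" using ends(2) by (metis diff_Suc_1, simp)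
    then show ?thesis using e ends(1) by (simp add: insert_commute)
  qed
  ultimately have "is_cycle E xs" using xs by (simp add: is_cycle_def is_path_def)
  then show False using tree by (auto simp: is_tree_def)
qed

lemma tree_path_edge_separates:
  assumes tree: "is_tree V E" and P: "is_path E P i j" and e: "e \<in> walk_edges P"
  shows "\<not> (adj (E - {e}))\<^sup>*\<^sup>* i j"
proof
  assume ij: "(adj (E - {e}))\<^sup>*\<^sup>* i j"
  obtain m where m: "Suc m < length P" "e = {P!m, P!Suc m}" using e by (auto simp: walk_edges_def)
  have d: "distinct P" and wE: "walk_edges P \<subseteq> E" using P by (auto simp: is_path_def is_walk_iff_walk_edges)
  have other_edges: "{P!p, P!Suc p} \<in> E - {e}" if "Suc p < length P" "p \<noteq> m" for p
  proof -
    have "{P!p, P!Suc p} \<noteq> {P!m, P!Suc m}"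
      using d that m(1) by (auto simp: doubleton_eq_iff nth_eq_iff_index_eq)
    then show ?thesis using wE that m by (auto simp: walk_edges_def)
  qed
  have "(adj (E - {e}))\<^sup>*\<^sup>* (P!0) (P!m)"
    by (rule rtranclp_adj_walk_segment) (use other_edges m in auto)
  moreover have "(adj (E - {e}))\<^sup>*\<^sup>* (P!Suc m) (P!(length P - 1))"
    by (rule rtranclp_adj_walk_segment) (use other_edges m in auto)
  moreover have "P!0 = i" "P!(length P - 1) = j"
    using P by (auto simp: is_path_def hd_conv_nth last_conv_nth)
  ultimately have "(adj (E - {e}))\<^sup>*\<^sup>* (P!m) (P!Suc m)"
    using ij by (metis rtranclp_adj_sym rtranclp_trans)
  moreover have "P!m \<noteq> P!Suc m" using d m by (simp add: nth_eq_iff_index_eq)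
  ultimately show False using tree_edge_is_bridge[OF tree] wE e m by blast
qed

lemma connected_graph_incident_edge:
  assumes "connected_graph V E" "a \<in> V" "b \<in> V" "a \<noteq> b"
  obtains y where "{a, y} \<in> E"
proof -
  have "(adj E)\<^sup>*\<^sup>* a b" using assms by (auto simp: connected_graph_def)
  then show ?thesis using assms(4) that by (cases rule: converse_rtranclpE) (auto simp: adj_def)
qed

lemma connected_graph_union_paths:
  assumes J: "finite J" "J \<noteq> {}" and P: "\<And>j. j \<in> J \<Longrightarrow> is_path E (P j) a j"
  shows "connected_graph (\<Union>j\<in>J. set (P j)) (\<Union>j\<in>J. walk_edges (P j))"
    (is "connected_graph ?V ?E")
proof -
  have from_a: "(adj ?E)\<^sup>*\<^sup>* a u" if u: "u \<in> ?V" for u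
  proof -
    obtain j where j: "j \<in> J" "u \<in> set (P j)" using u by blast
    have "walk_edges (P j) \<subseteq> ?E" using j(1) by blast
    then show ?thesis by (rule rtranclp_adj_mono[OF _ rtranclp_adj_along_path[OF P[OF j(1)] j(2)]])
  qed
  have "simple_graph ?V ?E"
    unfolding simple_graph_def
  proof (intro conjI ballI)
    show "finite ?V" using J by simp
    fix e assume "e \<in> ?E"
    then obtain j p where jp: "j \<in> J" "Suc p < length (P j)" "e = {P j ! p, P j ! Suc p}"
      by (auto simp: walk_edges_def)
    have "distinct (P j)" using P[OF jp(1)] by (simp add: is_path_def)
    then have "P j ! p \<noteq> P j ! Suc p" using jp(2) by (simp add: nth_eq_iff_index_eq)
    moreover have "P j ! p \<in> set (P j)" "P j ! Suc p \<in> set (P j)" using jp(2) by simp_all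
    then have "P j ! p \<in> ?V" "P j ! Suc p \<in> ?V" using jp(1) by blast+
    ultimately show "\<exists>u v. u \<noteq> v \<and> u \<in> ?V \<and> v \<in> ?V \<and> e = {u, v}" using jp by blast
  qed
  moreover have "?V \<noteq> {}"
  proof -
    obtain j where "j \<in> J" using J by blast
    then have "P j \<noteq> []" using P by (simp add: is_path_def)
    then show ?thesis using \<open>j \<in> J\<close> by fastforce
  qed
  moreover have "(adj ?E)\<^sup>*\<^sup>* u v" if "u \<in> ?V" "v \<in> ?V" for u v
    using rtranclp_adj_sym[OF from_a[OF that(1)]] from_a[OF that(2)] by (rule rtranclp_trans)
  ultimately show ?thesis by (simp add: connected_graph_def)
qed

section \<open>Lightest connected subgraphs\<close>

lemma Dsub_candidates_finite:
  "finite E \<Longrightarrow> finite {sum w E' | V' E'. subgraph V' E' V E \<and> connected_graph V' E' \<and> I \<subseteq> V'}"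
  by (rule finite_subset[of _ "sum w ` Pow E"]) (auto simp: subgraph_def)

lemma Dsub_le:
  assumes "finite E" "subgraph V' E' V E" "connected_graph V' E'" "I \<subseteq> V'"
  shows "Dsub V E w I \<le> sum w E'"
  unfolding Dsub_def
  by (rule cInf_lower[OF _ bdd_below_finite[OF Dsub_candidates_finite[OF assms(1)]]]) (use assms in blast)

lemma Dsub_greatest:
  assumes "\<exists>V' E'. subgraph V' E' V E \<and> connected_graph V' E' \<and> I \<subseteq> V'"
    and "\<And>V' E'. subgraph V' E' V E \<Longrightarrow> connected_graph V' E' \<Longrightarrow> I \<subseteq> V' \<Longrightarrow> z \<le> sum w E'"
  shows "z \<le> Dsub V E w I"
  unfolding Dsub_def by (rule cInf_greatest) (use assms in auto)

definition optimal_subgraph ::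
    "'v set \<Rightarrow> 'v set set \<Rightarrow> ('v set \<Rightarrow> real) \<Rightarrow> 'v set \<Rightarrow> 'v set \<Rightarrow> 'v set set \<Rightarrow> bool" where
  "optimal_subgraph V E w I V' E' \<longleftrightarrow>
     subgraph V' E' V E \<and> connected_graph V' E' \<and> I \<subseteq> V' \<and> sum w E' = Dsub V E w I"

lemma tree_optimal_subgraph_exists:
  assumes tree: "is_tree V E" and "I \<subseteq> V"
  shows "\<exists>V' E'. optimal_subgraph V E w I V' E'"
proof -
  let ?S = "{sum w E' | V' E'. subgraph V' E' V E \<and> connected_graph V' E' \<and> I \<subseteq> V'}"
  have "connected_graph V E" using tree by (simp add: is_tree_def)
  moreover from this have "subgraph V E V E"
    by (auto simp: subgraph_def connected_graph_def simple_graph_def)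
  ultimately have "?S \<noteq> {}" using assms(2) by blast
  moreover have "finite ?S" using Dsub_candidates_finite[OF tree_finite_edges[OF tree]] .
  ultimately have "Inf ?S \<in> ?S" using Min_in[of ?S] cInf_eq_Min[of ?S] by simp
  then obtain V' E' where "subgraph V' E' V E" "connected_graph V' E'" "I \<subseteq> V'" "sum w E' = Inf ?S"
    by auto
  then show ?thesis unfolding optimal_subgraph_def Dsub_def by blast
qed

section \<open>Stars\<close>

definition star_edges :: "'v \<Rightarrow> 'v set \<Rightarrow> 'v set set" where
  "star_edges c L = (\<lambda>l. {c, l}) ` L"

lemma star_connected:
  assumes "finite L" "c \<notin> L"
  shows "connected_graph (insert c L) (star_edges c L)"
proof -
  have to_c: "(adj (star_edges c L))\<^sup>*\<^sup>* u c" if "u \<in> insert c L" for u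
  proof (cases "u = c")
    case False
    then have "adj (star_edges c L) u c"
      using that by (auto simp: adj_def star_edges_def insert_commute)
    then show ?thesis by (rule r_into_rtranclp)
  qed simp
  have "simple_graph (insert c L) (star_edges c L)"
    using assms by (force simp: simple_graph_def star_edges_def)
  moreover have "(adj (star_edges c L))\<^sup>*\<^sup>* u v" if "u \<in> insert c L" "v \<in> insert c L" for u v
    using to_c[OF that(1)] rtranclp_adj_sym[OF to_c[OF that(2)]] by (rule rtranclp_trans)
  ultimately show ?thesis by (simp add: connected_graph_def)
qed

lemma star_no_cycle: "\<not> is_cycle (star_edges c L) vs"
proof
  assume cycle: "is_cycle (star_edges c L) vs"
  let ?n = "length vs"
  have n: "3 \<le> ?n" and d: "distinct vs" using cycle by (auto simp: is_cycle_def)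
  have centre: "c \<in> {vs!i, vs!((i + 1) mod ?n)}" if "i < ?n" for i
  proof -
    have "{vs!i, vs!((i + 1) mod ?n)} \<in> star_edges c L" using cycle that by (simp add: is_cycle_def)
    then show ?thesis unfolding star_edges_def by (metis image_iff insertI1)
  qed
  have n0: "0 < ?n" "1 < ?n" "2 < ?n" using n by auto
  have "(0 + 1) mod ?n = 1" "(1 + 1) mod ?n = 2" using n by auto
  then have "c \<in> {vs!0, vs!1}" "c \<in> {vs!1, vs!2}" "c \<in> {vs!2, vs!((2 + 1) mod ?n)}"
    using centre[OF n0(1)] centre[OF n0(2)] centre[OF n0(3)] by simp_all
  moreover have "(2 + 1) mod ?n \<noteq> 1" "(2 + 1) mod ?n \<noteq> 2" "(2 + 1) mod ?n < ?n"
    using n by (auto simp: mod_if)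
  then have "vs!((2 + 1) mod ?n) \<noteq> vs!1" "vs!((2 + 1) mod ?n) \<noteq> vs!2"
    using d n0 by (auto simp: nth_eq_iff_index_eq)
  moreover have "vs!0 \<noteq> vs!1" "vs!1 \<noteq> vs!2" "vs!0 \<noteq> vs!2"
    using d n0 by (auto simp: nth_eq_iff_index_eq)
  ultimately show False by auto
qed

lemma star_tree:
  assumes "finite L" "c \<notin> L"
  shows "is_tree (insert c L) (star_edges c L)"
  using star_connected[OF assms] star_no_cycle[of c L] by (simp add: is_tree_def)

lemma star_leaf: "l \<in> L \<Longrightarrow> c \<notin> L \<Longrightarrow> is_leaf (star_edges c L) l"
proof -
  assume "l \<in> L" "c \<notin> L"
  then have "{e \<in> star_edges c L. l \<in> e} = {{c, l}}" by (auto simp: star_edges_def)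
  then show ?thesis by (simp add: is_leaf_def)
qed

lemma star_subgraph_contains_edges:
  assumes "c \<notin> L" and sub: "subgraph V' E' (insert c L) (star_edges c L)"
    and con: "connected_graph V' E'" and A: "A \<subseteq> V'" "2 \<le> card A"
  shows "star_edges c (A \<inter> L) \<subseteq> E'"
proof
  fix e assume "e \<in> star_edges c (A \<inter> L)"
  then obtain l where l: "l \<in> A" "l \<in> L" "e = {c, l}" by (auto simp: star_edges_def)
  obtain m where "m \<in> A" "m \<noteq> l"
    using A(2) by (metis card_le_Suc0_iff_eq card.infinite not_less_eq_eq numeral_2_eq_2 zero_le)
  then obtain y where y: "{l, y} \<in> E'"
    using connected_graph_incident_edge[OF con, of l m] A(1) l(1) by blast
  then have "{l, y} \<in> star_edges c L" using sub by (auto simp: subgraph_def)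
  then have "{l, y} = {c, l}" using l \<open>c \<notin> L\<close> by (auto simp: star_edges_def doubleton_eq_iff)
  then show "e \<in> E'" using y l by simp
qed

lemma sum_star_edges:
  assumes "finite J" "J \<subseteq> L" "c \<notin> L"
  shows "(\<Sum>e\<in>star_edges c J. sum x (e \<inter> L)) = sum x J"
proof -
  have "inj_on (\<lambda>l. {c, l}) J" by (auto simp: inj_on_def doubleton_eq_iff)
  then have "(\<Sum>e\<in>star_edges c J. sum x (e \<inter> L)) = (\<Sum>l\<in>J. sum x ({c, l} \<inter> L))"
    by (simp add: star_edges_def sum.reindex)
  also have "\<dots> = sum x J"
    using assms by (intro sum.cong) (auto simp: Int_insert_left)
  finally show ?thesis .
qed

lemma Dsub_star:
  assumes L: "finite L" "c \<notin> L" and x: "\<And>l. l \<in> L \<Longrightarrow> 0 \<le> x l"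
    and A: "A \<subseteq> insert c L" "2 \<le> card A"
  shows "Dsub (insert c L) (star_edges c L) (\<lambda>e. sum x (e \<inter> L)) A = sum x (A \<inter> L)"
proof (rule antisym)
  let ?w = "\<lambda>e. sum x (e \<inter> L)"
  have sub: "subgraph (insert c (A \<inter> L)) (star_edges c (A \<inter> L)) (insert c L) (star_edges c L)"
    by (auto simp: subgraph_def star_edges_def)
  have con: "connected_graph (insert c (A \<inter> L)) (star_edges c (A \<inter> L))"
    using L by (intro star_connected) auto
  have AV: "A \<subseteq> insert c (A \<inter> L)" using A by auto
  have sum_A: "sum ?w (star_edges c (A \<inter> L)) = sum x (A \<inter> L)"
    using L by (intro sum_star_edges) auto
  have fin: "finite (star_edges c L)" using L by (simp add: star_edges_def)
  show "Dsub (insert c L) (star_edges c L) ?w A \<le> sum x (A \<inter> L)"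
    using Dsub_le[OF fin sub con AV, of ?w] sum_A by simp
  show "sum x (A \<inter> L) \<le> Dsub (insert c L) (star_edges c L) ?w A"
  proof (rule Dsub_greatest)
    show "\<exists>V' E'. subgraph V' E' (insert c L) (star_edges c L) \<and> connected_graph V' E' \<and> A \<subseteq> V'"
      using sub con AV by blast
  next
    fix V' E' assume sub': "subgraph V' E' (insert c L) (star_edges c L)"
      and con': "connected_graph V' E'" and AV': "A \<subseteq> V'"
    have "finite E'" using sub' fin by (auto simp: subgraph_def intro: finite_subset)
    moreover have "star_edges c (A \<inter> L) \<subseteq> E'"
      using star_subgraph_contains_edges[OF L(2) sub' con' AV' A(2)] .
    moreover have "0 \<le> ?w e" for e using x by (auto intro: sum_nonneg)
    ultimately have "sum ?w (star_edges c (A \<inter> L)) \<le> sum ?w E'" by (intro sum_mono2)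
    then show "sum x (A \<inter> L) \<le> sum ?w E'" using sum_A by simp
  qed
qed

lemma obtain_star_centre:
  fixes x :: "'a \<Rightarrow> real"
  assumes "infinite (UNIV :: 'a set)" "finite N" "card {i\<in>N. x i = 0} \<le> 1"
  obtains c where "c \<notin> {i\<in>N. x i \<noteq> 0}" "N \<subseteq> insert c {i\<in>N. x i \<noteq> 0}"
proof (cases "{i\<in>N. x i = 0} = {}")
  case True
  obtain c where "c \<notin> N" using ex_new_if_finite[OF assms(1,2)] by blast
  then show ?thesis using True by (intro that[of c]) auto
next
  case False
  then obtain c where c: "c \<in> N" "x c = 0" by blast
  have "finite {i\<in>N. x i = 0}" using assms(2) by simp
  then have "\<forall>a\<in>{i\<in>N. x i = 0}. \<forall>b\<in>{i\<in>N. x i = 0}. a = b"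
    using assms(3) card_le_Suc0_iff_eq by (metis One_nat_def)
  then have "N \<subseteq> insert c {i\<in>N. x i \<noteq> 0}" using c by auto
  moreover have "c \<notin> {i\<in>N. x i \<noteq> 0}" using c by simp
  ultimately show ?thesis using that by blast
qed

lemma star_realisation:
  fixes x :: "'a \<Rightarrow> real"
  assumes inf: "infinite (UNIV :: 'a set)" and N: "finite N" "3 \<le> card N"
    and nonneg: "\<And>i. i \<in> N \<Longrightarrow> 0 \<le> x i" and zeros: "card {i\<in>N. x i = 0} \<le> 1"
  shows "\<exists>V E w. is_tree V E \<and> (\<forall>e\<in>E. 0 < w e) \<and> N \<subseteq> V \<and> (\<forall>i\<in>N. 0 < x i \<longrightarrow> is_leaf E i) \<and>
           (\<forall>i\<in>N. Dsub V E w (N - {i}) = sum x (N - {i}))"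
proof -
  define L where "L = {i\<in>N. x i \<noteq> 0}"
  obtain c where c: "c \<notin> L" "N \<subseteq> insert c L"
    using obtain_star_centre[OF inf N(1) zeros] unfolding L_def by blast
  have "finite L" using N(1) by (simp add: L_def)
  \<comment> \<open>the edge \<open>{c, l}\<close> gets the weight \<open>x l\<close>\<close>
  define w where "w e = sum x (e \<inter> L)" for e
  have "is_tree (insert c L) (star_edges c L)" using star_tree[OF \<open>finite L\<close> c(1)] .
  moreover have "0 < w e" if e: "e \<in> star_edges c L" for e
  proof -
    obtain l where "l \<in> L" "e = {c, l}" using e by (auto simp: star_edges_def)
    then have "w e = x l" using c(1) by (auto simp: w_def Int_insert_left)
    then show ?thesis using \<open>l \<in> L\<close> nonneg by (force simp: L_def)
  qed
  moreover have "is_leaf (star_edges c L) i" if "i \<in> N" "0 < x i" for i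
    using that c(1) by (intro star_leaf) (auto simp: L_def)
  moreover have "Dsub (insert c L) (star_edges c L) w (N - {i}) = sum x (N - {i})" if "i \<in> N" for i
  proof -
    have "2 \<le> card (N - {i})" using N that by (simp add: card_Diff_singleton)
    then have "Dsub (insert c L) (star_edges c L) w (N - {i}) = sum x ((N - {i}) \<inter> L)"
      unfolding w_def using c(2) nonneg \<open>finite L\<close> c(1)
      by (intro Dsub_star) (auto simp: L_def)
    also have "\<dots> = sum x (N - {i})"
      using N(1) by (intro sum.mono_neutral_left) (auto simp: L_def)
    finally show ?thesis .
  qed
  ultimately show ?thesis
    using c(2) by (intro exI[of _ "insert c L"] exI[of _ "star_edges c L"] exI[of _ w]) simp
qed

definition star_leg :: "'a set \<Rightarrow> ('a \<Rightarrow> real) \<Rightarrow> 'a \<Rightarrow> real" where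
  "star_leg N d i = (\<Sum>j\<in>N. d j) / real (card N - 1) - d i"

lemma sum_star_leg:
  assumes "finite N" "2 \<le> card N" "i \<in> N"
  shows "sum (star_leg N d) (N - {i}) = d i"
proof -
  have "sum (star_leg N d) (N - {i}) =
      real (card N - 1) * ((\<Sum>j\<in>N. d j) / real (card N - 1)) - (\<Sum>j\<in>N - {i}. d j)"
    using assms by (simp add: star_leg_def sum_subtractf card_Diff_singleton)
  also have "\<dots> = d i" using assms by (simp add: sum_diff1)
  finally show ?thesis .
qed

lemma star_leg_eq:
  assumes "finite N" "2 \<le> card N" "i \<in> N"
  shows "star_leg N d i = ((\<Sum>j\<in>N - {i}. d j) - real (card N - 2) * d i) / real (card N - 1)"
proof -
  have "real (card N - 1) * star_leg N d i = (\<Sum>j\<in>N. d j) - real (card N - 1) * d i"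
    using assms by (simp add: star_leg_def right_diff_distrib)
  also have "\<dots> = (\<Sum>j\<in>N - {i}. d j) - real (card N - 2) * d i"
    using assms by (simp add: sum_diff1 algebra_simps)
  finally show ?thesis using assms(2) by (simp add: eq_divide_eq mult.commute)
qed

lemma
  assumes "finite N" "2 \<le> card N" "i \<in> N"
  shows star_leg_nonneg_iff: "0 \<le> star_leg N d i \<longleftrightarrow> real (card N - 2) * d i \<le> (\<Sum>j\<in>N - {i}. d j)"
    and star_leg_eq_0_iff: "star_leg N d i = 0 \<longleftrightarrow> real (card N - 2) * d i = (\<Sum>j\<in>N - {i}. d j)"
    and star_leg_pos_iff: "0 < star_leg N d i \<longleftrightarrow> real (card N - 2) * d i < (\<Sum>j\<in>N - {i}. d j)"
  using assms(2) by (auto simp: star_leg_eq[OF assms] zero_le_divide_iff zero_less_divide_iff)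

section \<open>Necessity of the inequalities\<close>

lemma sum_weight_multiplicity_le:
  fixes w :: "'e \<Rightarrow> real"
  assumes "finite K" "finite F" "\<And>k. k \<in> K \<Longrightarrow> finite (A k)"
    and "\<And>k e. k \<in> K \<Longrightarrow> e \<in> A k \<Longrightarrow> 0 \<le> w e"
  shows "(\<Sum>e\<in>F. w e * real (card {k\<in>K. e \<in> A k})) \<le> (\<Sum>k\<in>K. sum w (A k))"
proof -
  have "(\<Sum>e\<in>F. w e * real (card {k\<in>K. e \<in> A k})) = (\<Sum>e\<in>F. \<Sum>k\<in>K. if e \<in> A k then w e else 0)"
    using assms(1) by (simp add: sum.inter_filter[symmetric] mult.commute)
  also have "\<dots> = (\<Sum>k\<in>K. \<Sum>e\<in>F. if e \<in> A k then w e else 0)"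
    by (rule sum.swap)
  also have "\<dots> = (\<Sum>k\<in>K. sum w {e\<in>F. e \<in> A k})"
    using assms(2) by (simp add: sum.inter_filter)
  also have "\<dots> \<le> (\<Sum>k\<in>K. sum w (A k))"
    using assms by (intro sum_mono sum_mono2) auto
  finally show ?thesis .
qed

lemma obtain_third_element:
  assumes "finite N" "3 \<le> card N"
  obtains m where "m \<in> N" "m \<noteq> i" "m \<noteq> j"
proof -
  have "card N - card {i, j} \<le> card (N - {i, j})" by (rule diff_card_le_card_Diff) simp
  moreover have "card {i, j} \<le> 2" by (simp add: card_insert_le_m1)
  ultimately have "N - {i, j} \<noteq> {}" using assms(2) by fastforce
  then show ?thesis using that by blast
qed

locale steiner_optima =
  fixes V :: "'v set" and E :: "'v set set" and w :: "'v set \<Rightarrow> real" and N :: "'v set"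
    and VR :: "'v \<Rightarrow> 'v set" and ER :: "'v \<Rightarrow> 'v set set"
  assumes tree: "is_tree V E" and weight_pos: "\<forall>e\<in>E. 0 < w e" and terminals: "N \<subseteq> V"
    and finite_terminals: "finite N" and three_terminals: "3 \<le> card N"
    and optimal: "\<And>k. k \<in> N \<Longrightarrow> optimal_subgraph V E w (N - {k}) (VR k) (ER k)"
begin

abbreviation Dhat :: "'v \<Rightarrow> real" where
  "Dhat k \<equiv> Dsub V E w (N - {k})"

lemma optimal_edges_subset: "k \<in> N \<Longrightarrow> ER k \<subseteq> E"
  using optimal[of k] by (simp add: optimal_subgraph_def subgraph_def)

lemma optimal_connected_avoiding:
  assumes "k \<in> N" "a \<in> N - {k}" "b \<in> N - {k}" "e \<notin> ER k"
  shows "(adj (E - {e}))\<^sup>*\<^sup>* a b"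
proof -
  have "connected_graph (VR k) (ER k)" "N - {k} \<subseteq> VR k"
    using optimal[OF assms(1)] by (simp_all add: optimal_subgraph_def)
  then have reach: "(adj (ER k))\<^sup>*\<^sup>* a b" using assms(2,3) unfolding connected_graph_def by blast
  have "ER k \<subseteq> E - {e}" using optimal_edges_subset[OF assms(1)] assms(4) by blast
  then show ?thesis using reach by (rule rtranclp_adj_mono)
qed

lemma path_edge_in_optimal:
  assumes "is_path E P i j" "e \<in> walk_edges P" "i \<in> N" "j \<in> N" "k \<in> N - {i, j}"
  shows "e \<in> ER k"
proof (rule ccontr)
  assume "e \<notin> ER k"
  then have "(adj (E - {e}))\<^sup>*\<^sup>* i j" using assms(3-5) by (intro optimal_connected_avoiding) auto
  then show False using tree_path_edge_separates[OF tree assms(1,2)] by contradiction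
qed

lemma path_exists: "a \<in> N \<Longrightarrow> b \<in> N \<Longrightarrow> \<exists>P. is_path E P a b"
  using terminals by (intro tree_path_exists[OF tree]) auto

lemma Dhat_le_weight_of_paths:
  assumes i: "i \<in> N" and P: "\<And>j. j \<in> N - {i} \<Longrightarrow> is_path E (P j) i j"
  shows "Dhat i \<le> sum w (\<Union>j\<in>N - {i}. walk_edges (P j))"
proof (rule Dsub_le[OF tree_finite_edges[OF tree]])
  let ?V = "\<Union>j\<in>N - {i}. set (P j)" and ?F = "\<Union>j\<in>N - {i}. walk_edges (P j)"
  have "N - {i} \<noteq> {}" using obtain_third_element[OF finite_terminals three_terminals, of i i] by blast
  then show "connected_graph ?V ?F"
    using finite_terminals P by (intro connected_graph_union_paths) auto
  have "simple_graph V E" using tree by (simp add: is_tree_def connected_graph_def)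
  then have "set (P j) \<subseteq> V" if "j \<in> N - {i}" for j
    using path_vertices_subset[OF _ P[OF that]] i terminals by blast
  moreover have "?F \<subseteq> E" using P by (auto simp: is_path_def is_walk_iff_walk_edges)
  ultimately show "subgraph ?V ?F V E" using walk_edge_subset_vertices by (fastforce simp: subgraph_def)
  show "N - {i} \<subseteq> ?V"
  proof
    fix j assume j: "j \<in> N - {i}"
    then have "j \<in> set (P j)" using P[OF j] last_in_set by (fastforce simp: is_path_def)
    then show "j \<in> ?V" using j by blast
  qed
qed

lemma weighted_multiplicity_le_sum_Dhat:
  assumes "F \<subseteq> E"
  shows "(\<Sum>e\<in>F. w e * real (card {k\<in>N - {i}. e \<in> ER k})) \<le> (\<Sum>k\<in>N - {i}. Dhat k)"
proof -
  have finE: "finite E" using tree_finite_edges[OF tree] .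
  have "finite (ER k)" if "k \<in> N - {i}" for k
    using optimal_edges_subset that finE finite_subset by blast
  moreover have "0 \<le> w e" if "k \<in> N - {i}" "e \<in> ER k" for k e
    using optimal_edges_subset that weight_pos by (meson DiffD1 less_imp_le subsetD)
  moreover have "finite F" using assms finE finite_subset by blast
  ultimately have "(\<Sum>e\<in>F. w e * real (card {k\<in>N - {i}. e \<in> ER k})) \<le> (\<Sum>k\<in>N - {i}. sum w (ER k))"
    using finite_terminals by (intro sum_weight_multiplicity_le) auto
  also have "\<dots> = (\<Sum>k\<in>N - {i}. Dhat k)"
    using optimal by (intro sum.cong) (auto simp: optimal_subgraph_def)
  finally show ?thesis .
qed

lemma path_edge_multiplicity:
  assumes P: "is_path E P i j" and "e \<in> walk_edges P" and i: "i \<in> N" and j: "j \<in> N - {i}"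
  shows "card N - 2 \<le> card {k\<in>N - {i}. e \<in> ER k}"
    and "e \<in> ER j \<Longrightarrow> card N - 1 \<le> card {k\<in>N - {i}. e \<in> ER k}"
proof -
  have in_optimal: "N - {i} - {j} \<subseteq> {k\<in>N - {i}. e \<in> ER k}"
    using path_edge_in_optimal[OF assms(1,2)] i j by auto
  then have "card (N - {i} - {j}) \<le> card {k\<in>N - {i}. e \<in> ER k}"
    using finite_terminals by (intro card_mono) auto
  then show "card N - 2 \<le> card {k\<in>N - {i}. e \<in> ER k}"
    using i j finite_terminals by (simp add: card_Diff_singleton)
  assume "e \<in> ER j"
  then have "N - {i} \<subseteq> {k\<in>N - {i}. e \<in> ER k}" using in_optimal j by auto
  then have "card (N - {i}) \<le> card {k\<in>N - {i}. e \<in> ER k}"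
    using finite_terminals by (intro card_mono) auto
  then show "card N - 1 \<le> card {k\<in>N - {i}. e \<in> ER k}"
    using i finite_terminals by (simp add: card_Diff_singleton)
qed

lemma Dhat_bound_from_paths:
  assumes i: "i \<in> N" and P: "\<And>j. j \<in> N - {i} \<Longrightarrow> is_path E (P j) i j"
  shows "real (card N - 2) * Dhat i \<le> (\<Sum>k\<in>N - {i}. Dhat k)"
    and "\<exists>j\<in>N - {i}. walk_edges (P j) \<inter> ER j \<noteq> {} \<Longrightarrow>
           real (card N - 2) * Dhat i < (\<Sum>k\<in>N - {i}. Dhat k)"
proof -
  define F where "F = (\<Union>j\<in>N - {i}. walk_edges (P j))"
  define mult where "mult e = real (card {k\<in>N - {i}. e \<in> ER k})" for e
  have F_sub: "F \<subseteq> E" using P by (auto simp: F_def is_path_def is_walk_iff_walk_edges)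
  have finF: "finite F" using F_sub tree_finite_edges[OF tree] finite_subset by blast
  have count: "(\<Sum>e\<in>F. w e * mult e) \<le> (\<Sum>k\<in>N - {i}. Dhat k)"
    unfolding mult_def using weighted_multiplicity_le_sum_Dhat[OF F_sub] .
  have "real (card N - 2) * Dhat i \<le> real (card N - 2) * sum w F"
    using Dhat_le_weight_of_paths[OF i P] by (intro mult_left_mono) (auto simp: F_def)
  also have "\<dots> = (\<Sum>e\<in>F. w e * real (card N - 2))" by (subst mult.commute) (rule sum_distrib_right)
  finally have lower: "real (card N - 2) * Dhat i \<le> (\<Sum>e\<in>F. w e * real (card N - 2))" .
  have termwise: "w e * real (card N - 2) \<le> w e * mult e" if e: "e \<in> F" for e
  proof -
    obtain j where "j \<in> N - {i}" "e \<in> walk_edges (P j)" using e by (auto simp: F_def)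
    then have "card N - 2 \<le> card {k\<in>N - {i}. e \<in> ER k}" using path_edge_multiplicity(1)[OF P] i by blast
    moreover have "0 \<le> w e" using e F_sub weight_pos by fastforce
    ultimately show ?thesis unfolding mult_def by (intro mult_left_mono) auto
  qed
  then have "(\<Sum>e\<in>F. w e * real (card N - 2)) \<le> (\<Sum>e\<in>F. w e * mult e)"
    by (rule sum_mono)
  with lower count show "real (card N - 2) * Dhat i \<le> (\<Sum>k\<in>N - {i}. Dhat k)" by linarith
  assume "\<exists>j\<in>N - {i}. walk_edges (P j) \<inter> ER j \<noteq> {}"
  then obtain j e where j: "j \<in> N - {i}" "e \<in> walk_edges (P j)" "e \<in> ER j" by blast
  then have "card N - 1 \<le> card {k\<in>N - {i}. e \<in> ER k}" using path_edge_multiplicity(2)[OF P] i by blast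
  then have "real (card N - 2) < mult e" using three_terminals by (simp add: mult_def)
  moreover have "e \<in> F" using j by (auto simp: F_def)
  moreover from this have "0 < w e" using F_sub weight_pos by blast
  ultimately have "\<exists>e\<in>F. w e * real (card N - 2) < w e * mult e"
    by (intro bexI[of _ e]) simp_all
  then have "(\<Sum>e\<in>F. w e * real (card N - 2)) < (\<Sum>e\<in>F. w e * mult e)"
    using termwise by (intro sum_strict_mono_ex1[OF finF]) auto
  with lower count show "real (card N - 2) * Dhat i < (\<Sum>k\<in>N - {i}. Dhat k)" by linarith
qed

lemma Dhat_le_sum:
  assumes "i \<in> N"
  shows "real (card N - 2) * Dhat i \<le> (\<Sum>k\<in>N - {i}. Dhat k)"
  using assms path_exists[OF assms] by (intro Dhat_bound_from_paths(1)[of i "\<lambda>j. SOME P. is_path E P i j"])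
    (auto intro: someI_ex)

lemma Dhat_less_sum:
  assumes i: "i \<in> N" and j: "j \<in> N - {i}" and P: "is_path E P i j" and e: "e \<in> walk_edges P" "e \<in> ER j"
  shows "real (card N - 2) * Dhat i < (\<Sum>k\<in>N - {i}. Dhat k)"
proof (rule Dhat_bound_from_paths(2)[OF i])
  let ?P = "(\<lambda>j'. SOME P. is_path E P i j')(j := P)"
  show "is_path E (?P j') i j'" if "j' \<in> N - {i}" for j'
    using P path_exists[OF i] that by (auto intro: someI_ex)
  show "\<exists>j'\<in>N - {i}. walk_edges (?P j') \<inter> ER j' \<noteq> {}"
    using j e by (intro bexI[of _ j]) auto
qed

lemma Dhat_less_sum_at_one_of_two:
  assumes i: "i \<in> N" and i': "i' \<in> N" and ne: "i \<noteq> i'"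
  shows "real (card N - 2) * Dhat i < (\<Sum>k\<in>N - {i}. Dhat k) \<or>
         real (card N - 2) * Dhat i' < (\<Sum>k\<in>N - {i'}. Dhat k)"
proof -
  obtain P where P: "is_path E P i i'" using path_exists[OF i i'] by blast
  obtain y where e: "{i, y} \<in> walk_edges P" using path_first_edge[OF P ne] .
  obtain m where m: "m \<in> N" "m \<noteq> i" "m \<noteq> i'"
    using obtain_third_element[OF finite_terminals three_terminals] by blast
  consider "{i, y} \<in> ER i'" | "{i, y} \<in> ER i" | "{i, y} \<notin> ER i'" "{i, y} \<notin> ER i" by blast
  then show ?thesis
  proof cases
    case 1
    then show ?thesis using Dhat_less_sum[OF i _ P e] i' ne by blast
  next
    case 2
    have "{i, y} \<in> walk_edges (rev P)" using e by (simp add: walk_edges_rev)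
    then show ?thesis using Dhat_less_sum[OF i' _ path_rev[OF P] _ 2] i ne by blast
  next
    \<comment> \<open>otherwise the third terminal \<open>m\<close> joins \<open>i\<close> and \<open>i'\<close> around the edge\<close>
    case 3
    have "(adj (E - {{i, y}}))\<^sup>*\<^sup>* i m" using 3(1) i i' m ne by (intro optimal_connected_avoiding) auto
    moreover have "(adj (E - {{i, y}}))\<^sup>*\<^sup>* m i'" using 3(2) i i' m ne by (intro optimal_connected_avoiding) auto
    ultimately have "(adj (E - {{i, y}}))\<^sup>*\<^sup>* i i'" by (rule rtranclp_trans)
    then show ?thesis using tree_path_edge_separates[OF tree P e] by contradiction
  qed
qed

lemma card_Dhat_equalities_le_1:
  "card {i\<in>N. real (card N - 2) * Dhat i = (\<Sum>k\<in>N - {i}. Dhat k)} \<le> 1"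
    (is "card ?Q \<le> 1")
proof -
  have "i = i'" if "i \<in> ?Q" "i' \<in> ?Q" for i i'
  proof (rule ccontr)
    assume "i \<noteq> i'"
    with that show False using Dhat_less_sum_at_one_of_two[of i i'] by auto
  qed
  moreover have "finite ?Q" using finite_terminals by simp
  ultimately show ?thesis using card_le_Suc0_iff_eq[of ?Q] by (simp add: One_nat_def)
qed

lemma Dhat_less_sum_at_leaf:
  assumes i: "i \<in> N" and leaf: "is_leaf E i"
  shows "real (card N - 2) * Dhat i < (\<Sum>k\<in>N - {i}. Dhat k)"
proof -
  obtain j where j: "j \<in> N" "j \<noteq> i"
    using obtain_third_element[OF finite_terminals three_terminals, of i i] by blast
  obtain P where P: "is_path E P i j" using path_exists[OF i j(1)] by blast
  obtain y where y: "{i, y} \<in> walk_edges P" using path_first_edge[OF P j(2)[symmetric]] .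
  obtain m where m: "m \<in> N" "m \<noteq> i" "m \<noteq> j"
    using obtain_third_element[OF finite_terminals three_terminals] by blast
  have conn: "connected_graph (VR j) (ER j)" and "N - {j} \<subseteq> VR j"
    using optimal[OF j(1)] by (simp_all add: optimal_subgraph_def)
  then have "i \<in> VR j" "m \<in> VR j" using i j m by auto
  then obtain y' where y': "{i, y'} \<in> ER j"
    by (rule connected_graph_incident_edge[OF conn _ _ m(2)[symmetric]])
  \<comment> \<open>both edges contain the leaf \<open>i\<close>, so they coincide\<close>
  obtain e1 where e1: "{e\<in>E. i \<in> e} = {e1}"
    using leaf by (auto simp: is_leaf_def card_1_singleton_iff)
  have "walk_edges P \<subseteq> E" using P by (simp add: is_path_def is_walk_iff_walk_edges)
  then have "{i, y} \<in> E" "{i, y'} \<in> E" using y y' optimal_edges_subset[OF j(1)] by blast+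
  then have "{i, y} \<in> {e\<in>E. i \<in> e}" "{i, y'} \<in> {e\<in>E. i \<in> e}" by simp_all
  then have "{i, y} = {i, y'}" unfolding e1 by simp
  then have "{i, y} \<in> ER j" using y' by simp
  moreover have "j \<in> N - {i}" using j by simp
  ultimately show ?thesis using Dhat_less_sum[OF i _ P y] by blast
qed

end

lemma steiner_optima_exist:
  assumes tree: "is_tree V E" and "\<forall>e\<in>E. 0 < w e" "N \<subseteq> V" "finite N" "3 \<le> card N"
  obtains VR ER where "steiner_optima V E w N VR ER"
proof -
  have "\<exists>R. optimal_subgraph V E w (N - {k}) (fst R) (snd R)" for k
  proof -
    have "N - {k} \<subseteq> V" using assms(3) by blast
    then obtain V' E' where "optimal_subgraph V E w (N - {k}) V' E'"
      using tree_optimal_subgraph_exists[OF tree] by blast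
    then show ?thesis by (intro exI[of _ "(V', E')"]) simp
  qed
  then obtain R where "\<And>k. optimal_subgraph V E w (N - {k}) (fst (R k)) (snd (R k))" by metis
  then show ?thesis using assms by (intro that[of "\<lambda>k. fst (R k)" "\<lambda>k. snd (R k)"]) (simp add: steiner_optima_def)
qed

lemma tree_realisation_iff:
  fixes N :: "'a set" and d :: "'a \<Rightarrow> real"
  assumes inf: "infinite (UNIV :: 'a set)" and N: "finite N" "3 \<le> card N"
  shows "(\<exists>V E w. is_tree V E \<and> (\<forall>e\<in>E. 0 < w e) \<and> N \<subseteq> V \<and> (\<forall>i\<in>N. Dsub V E w (N - {i}) = d i))
     \<longleftrightarrow> (\<forall>i\<in>N. real (card N - 2) * d i \<le> (\<Sum>j\<in>N - {i}. d j)) \<and>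
         card {i\<in>N. real (card N - 2) * d i = (\<Sum>j\<in>N - {i}. d j)} \<le> 1"
    (is "?realisable \<longleftrightarrow> ?ineqs \<and> card ?Q \<le> 1")
proof
  assume ?realisable
  then obtain V E w where tree: "is_tree V E" "\<forall>e\<in>E. 0 < w e" "N \<subseteq> V"
    and D: "\<forall>i\<in>N. Dsub V E w (N - {i}) = d i" by blast
  obtain VR ER where "steiner_optima V E w N VR ER" using steiner_optima_exist[OF tree N] .
  then interpret steiner_optima V E w N VR ER .
  have sums: "(\<Sum>k\<in>N - {i}. Dhat k) = (\<Sum>k\<in>N - {i}. d k)" for i using D by (intro sum.cong) auto
  have ?ineqs using Dhat_le_sum D sums by simp
  moreover have "?Q = {i\<in>N. real (card N - 2) * Dhat i = (\<Sum>k\<in>N - {i}. Dhat k)}"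
    using D sums by auto
  ultimately show "?ineqs \<and> card ?Q \<le> 1" using card_Dhat_equalities_le_1 by simp
next
  assume conds: "?ineqs \<and> card ?Q \<le> 1"
  have N2: "2 \<le> card N" using N by simp
  have "{i\<in>N. star_leg N d i = 0} = ?Q" using star_leg_eq_0_iff[OF N(1) N2] by auto
  then obtain V E w where "is_tree V E" "\<forall>e\<in>E. 0 < w e" "N \<subseteq> V"
    and D: "\<forall>i\<in>N. Dsub V E w (N - {i}) = sum (star_leg N d) (N - {i})"
    using star_realisation[OF inf N, of "star_leg N d"] star_leg_nonneg_iff[OF N(1) N2] conds by auto
  then show ?realisable using sum_star_leg[OF N(1) N2] by auto
qed

lemma leaf_tree_realisation_iff:
  fixes N :: "'a set" and d :: "'a \<Rightarrow> real"
  assumes inf: "infinite (UNIV :: 'a set)" and N: "finite N" "3 \<le> card N"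
  shows "(\<exists>V E w. is_tree V E \<and> (\<forall>e\<in>E. 0 < w e) \<and> N \<subseteq> V \<and> (\<forall>i\<in>N. is_leaf E i) \<and>
            (\<forall>i\<in>N. Dsub V E w (N - {i}) = d i))
     \<longleftrightarrow> (\<forall>i\<in>N. real (card N - 2) * d i < (\<Sum>j\<in>N - {i}. d j))"
    (is "?realisable \<longleftrightarrow> ?ineqs")
proof
  assume ?realisable
  then obtain V E w where tree: "is_tree V E" "\<forall>e\<in>E. 0 < w e" "N \<subseteq> V"
    and leaves: "\<forall>i\<in>N. is_leaf E i" and D: "\<forall>i\<in>N. Dsub V E w (N - {i}) = d i" by blast
  obtain VR ER where "steiner_optima V E w N VR ER" using steiner_optima_exist[OF tree N] .
  then interpret steiner_optima V E w N VR ER .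
  have sums: "(\<Sum>k\<in>N - {i}. Dhat k) = (\<Sum>k\<in>N - {i}. d k)" for i using D by (intro sum.cong) auto
  show ?ineqs using Dhat_less_sum_at_leaf leaves D sums by simp
next
  assume ?ineqs
  have N2: "2 \<le> card N" using N by simp
  then have pos: "\<forall>i\<in>N. 0 < star_leg N d i" using star_leg_pos_iff[OF N(1)] \<open>?ineqs\<close> by blast
  then have "{i\<in>N. star_leg N d i = 0} = {}" by force
  then have "card {i\<in>N. star_leg N d i = 0} \<le> 1" by (metis card.empty zero_le_one)
  then obtain V E w where "is_tree V E" "\<forall>e\<in>E. 0 < w e" "N \<subseteq> V" "\<forall>i\<in>N. is_leaf E i"
    and D: "\<forall>i\<in>N. Dsub V E w (N - {i}) = sum (star_leg N d) (N - {i})"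
    using star_realisation[OF inf N, of "star_leg N d"] pos by (auto simp: less_imp_le)
  then show ?realisable using sum_star_leg[OF N(1) N2] by auto
qed

theorem theorem3p1:
  fixes n :: nat and D :: "nat set \<Rightarrow> real"
  assumes "n \<ge> 3"
    and "\<And>I. I \<subseteq> {1..n} \<Longrightarrow> card I = n - 1 \<Longrightarrow> D I > 0"
  shows "((\<exists>(V::nat set) E w. is_tree V E \<and> (\<forall>e\<in>E. w e > 0) \<and> {1..n} \<subseteq> V \<and>
             (\<forall>i\<in>{1..n}. Dsub V E w ({1..n} - {i}) = D ({1..n} - {i})))
          \<longleftrightarrow> ((\<forall>i\<in>{1..n}. real (n - 2) * D ({1..n} - {i}) \<le> (\<Sum>j\<in>{1..n} - {i}. D ({1..n} - {j})))
               \<and> card {i\<in>{1..n}. real (n - 2) * D ({1..n} - {i}) = (\<Sum>j\<in>{1..n} - {i}. D ({1..n} - {j}))} \<le> 1))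
       \<and> ((\<exists>(V::nat set) E w. is_tree V E \<and> (\<forall>e\<in>E. w e > 0) \<and> {1..n} \<subseteq> V \<and>
             (\<forall>i\<in>{1..n}. is_leaf E i) \<and>
             (\<forall>i\<in>{1..n}. Dsub V E w ({1..n} - {i}) = D ({1..n} - {i})))
          \<longleftrightarrow> (\<forall>i\<in>{1..n}. real (n - 2) * D ({1..n} - {i}) < (\<Sum>j\<in>{1..n} - {i}. D ({1..n} - {j}))))"
proof -
  have N: "finite {1..n}" "3 \<le> card {1..n}" using assms(1) by simp_all
  show ?thesis
    using tree_realisation_iff[OF infinite_UNIV_nat N, of "\<lambda>i. D ({1..n} - {i})"]
      leaf_tree_realisation_iff[OF infinite_UNIV_nat N, of "\<lambda>i. D ({1..n} - {i})"]
    by simp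
qed

end
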